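(* Let $z$ be a positive integer and let $C$ be a quasi-cyclic LDPC code with circulant matrices of size $z$ whose base matrix is the $12\times 24$ matrix $H_{b(1/2)}$ below. Then there is no quasi-cyclic LDPC code $D$ of type IEEE802.16e with circulant matrices of size $z$ such that (i) the parity-check matrices $H_C$ and $H_D$ have the same row-weight distribution, (ii) every column of $H_D$ has Hamming weight at least $2$, and (iii) $D^{\perp}\subset C$. The rows of $H_{b(1/2)}$ are: 011000001100110000000000, 010001110001011000000000, 000111010001001100000000, 101000001100000110000000, 001000100110000011000000, 000011010001100001100000, 001100000110000000110000, 011000100100000000011000, 100011010001000000001100, 000001010011000000000110, 001100001100000000000011, 100001010001100000000001.
   Context: All codes are binary linear codes over $\mathbb{F}_2$; $D^{\perp}=\{d' : d\,d'^T=0\ \forall d\in D\}$. For a positive integer $z$, $I_z(1)$ is the $z\times z$ circulant permutation matrix of one circular right shift and $I_z(b)=I_z(1)^b$. A quasi-cyclic LDPC code with circulant matrices of size $z$ is given by a $J\times L$ model matrix with entries in $\{0,\dots,z-1\}\cup\{\infty\}$; its parity-check matrix $H$ is obtained by replacing each finite entry $p$ by $I_z(p)$ and each $\infty$ by the $z\times z$ zero matrix, and the code is $\{x\in\mathbb{F}_2^{zL}:Hx^T=0\}$. Its base matrix $H_b$ is the binary $J\times L$ matrix with $1$ exactly where the model entry is finite. The row-weight distribution of a binary matrix is, for each $w$, the number of rows of Hamming weight $w$. A quasi-cyclic LDPC code is of type IEEE802.16e if its base matrix has the form $H_b=[H_{b1}\mid h_b\mid H'_{b2}]$, where $H_{b1}$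 is $J\times(L-J)$ arbitrary, $h_b=(h_b(0),\dots,h_b(J-1))^T$ is a column of weight $3$ with $h_b(0)=h_b(J-1)=1$ and $h_b(j)=1$ for exactly one $0<j<J-1$, and $H'_{b2}$ is the $J\times(J-1)$ dual-diagonal matrix with entries $1$ at positions $(i,i)$ and $(i+1,i)$ and $0$ elsewhere; moreover, in the model matrix every $1$ of $H'_{b2}$ has shift $0$, and the top and bottom $1$'s of $h_b$ have equal shift sizes while the middle $1$ of $h_b$ has its own (unpaired) shift size. The matrix $H_{b(1/2)}$ is the base matrix of the rate-$1/2$ LDPC codes of the IEEE802.16e standard. *)

theory Defs
  imports Main
begin

(* Binary vectors over F_2 are bool lists; a code of length n is a set of bool lists of length n. *)

definition orth :: "bool list \<Rightarrow> bool list \<Rightarrow> bool" where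
  "orth x y \<longleftrightarrow> even (card {j. j < length x \<and> j < length y \<and> x ! j \<and> y ! j})"

definition dual_code :: "nat \<Rightarrow> bool list set \<Rightarrow> bool list set" where
  "dual_code n D = {y. length y = n \<and> (\<forall>d\<in>D. orth d y)}"

(* I_z(b): entry (r,c) is 1 iff c = (r + b) mod z  (I_z(1) = one circular right shift of identity) *)
definition circ :: "nat \<Rightarrow> nat \<Rightarrow> nat \<Rightarrow> nat \<Rightarrow> bool" where
  "circ z b r c \<longleftrightarrow> c = (r + b) mod z"

(* Model matrices: entries Some p (p in {0..z-1}) or None (= infinity) *)
definition model_matrix :: "nat \<Rightarrow> nat \<Rightarrow> nat \<Rightarrow> (nat \<Rightarrow> nat \<Rightarrow> nat option) \<Rightarrow> bool" where
  "model_matrix z J L M \<longleftrightarrow> (\<forall>i<J. \<forall>j<L. \<forall>p. M i j = Some p \<longrightarrow> p < z)"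

definition pcm :: "nat \<Rightarrow> (nat \<Rightarrow> nat \<Rightarrow> nat option) \<Rightarrow> nat \<Rightarrow> nat \<Rightarrow> bool" where
  "pcm z M i j = (case M (i div z) (j div z) of None \<Rightarrow> False
                   | Some p \<Rightarrow> circ z p (i mod z) (j mod z))"

definition qc_code :: "nat \<Rightarrow> nat \<Rightarrow> nat \<Rightarrow> (nat \<Rightarrow> nat \<Rightarrow> nat option) \<Rightarrow> bool list set" where
  "qc_code z J L M = {x. length x = z * L \<and>
     (\<forall>i < z * J. even (card {j. j < z * L \<and> pcm z M i j \<and> x ! j}))}"

definition base_matrix :: "(nat \<Rightarrow> nat \<Rightarrow> nat option) \<Rightarrow> nat \<Rightarrow> nat \<Rightarrow> bool" where
  "base_matrix M i j \<longleftrightarrow> M i j \<noteq> None"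

definition row_weight_dist :: "(nat \<Rightarrow> nat \<Rightarrow> bool) \<Rightarrow> nat \<Rightarrow> nat \<Rightarrow> nat \<Rightarrow> nat" where
  "row_weight_dist H R N w = card {i. i < R \<and> card {j. j < N \<and> H i j} = w}"

(* Type IEEE802.16e: H_b = [H_b1 | h_b | H'_b2] *)
definition ieee_type :: "nat \<Rightarrow> nat \<Rightarrow> (nat \<Rightarrow> nat \<Rightarrow> nat option) \<Rightarrow> bool" where
  "ieee_type J L M \<longleftrightarrow> J \<le> L \<and>
     (\<exists>j0. 0 < j0 \<and> j0 < J - 1 \<and>
        (\<forall>i<J. base_matrix M i (L - J) \<longleftrightarrow> (i = 0 \<or> i = J - 1 \<or> i = j0))) \<and>
     M 0 (L - J) = M (J - 1) (L - J) \<and>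
     (\<forall>k < J - 1. \<forall>i < J.
        (base_matrix M i (L - J + 1 + k) \<longleftrightarrow> (i = k \<or> i = k + 1)) \<and>
        ((i = k \<or> i = k + 1) \<longrightarrow> M i (L - J + 1 + k) = Some 0))"

definition Hb_half_rows :: "nat list list" where
  "Hb_half_rows = [
    [0,1,1,0,0,0,0,0,1,1,0,0,1,1,0,0,0,0,0,0,0,0,0,0],
    [0,1,0,0,0,1,1,1,0,0,0,1,0,1,1,0,0,0,0,0,0,0,0,0],
    [0,0,0,1,1,1,0,1,0,0,0,1,0,0,1,1,0,0,0,0,0,0,0,0],
    [1,0,1,0,0,0,0,0,1,1,0,0,0,0,0,1,1,0,0,0,0,0,0,0],
    [0,0,1,0,0,0,1,0,0,1,1,0,0,0,0,0,1,1,0,0,0,0,0,0],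
    [0,0,0,0,1,1,0,1,0,0,0,1,1,0,0,0,0,1,1,0,0,0,0,0],
    [0,0,1,1,0,0,0,0,0,1,1,0,0,0,0,0,0,0,1,1,0,0,0,0],
    [0,1,1,0,0,0,1,0,0,1,0,0,0,0,0,0,0,0,0,1,1,0,0,0],
    [1,0,0,0,1,1,0,1,0,0,0,1,0,0,0,0,0,0,0,0,1,1,0,0],
    [0,0,0,0,0,1,0,1,0,0,1,1,0,0,0,0,0,0,0,0,0,1,1,0],
    [0,0,1,1,0,0,0,0,1,1,0,0,0,0,0,0,0,0,0,0,0,0,1,1],
    [1,0,0,0,0,1,0,1,0,0,0,1,1,0,0,0,0,0,0,0,0,0,0,1]]"

definition Hb_half :: "nat \<Rightarrow> nat \<Rightarrow> bool" where
  "Hb_half i j \<longleftrightarrow> Hb_half_rows ! i ! j = 1"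

end

theory Submission
  imports Defs "HOL-Number_Theory.Cong"
begin

text \<open>The zero word lies in \<open>D\<^sup>\<bottom>\<close>, so \<open>D\<^sup>\<bottom> \<subseteq> C\<close> forces \<open>D\<close> to have 24 block columns, and
  equal row-weight distributions force 12 block rows. Every row of \<open>H\<^sub>D\<close> lies in \<open>D\<^sup>\<bottom>\<close>, hence
  in \<open>C\<close>; summing the checks of \<open>C\<close> over a block row of \<open>H\<^sub>C\<close>, and using that a circulant
  permutation matrix has exactly one 1 in each row and each column, shows that the support of the
  first base row of \<open>D\<close> is orthogonal to every row of \<open>Hb_half\<close>. For type IEEE802.16e that
  support contains columns 12 and 13 and avoids columns 14 to 23, and no binary word of this shape
  passes the checks of \<open>Hb_half\<close>.\<close>

lemma card_lessThan_filter: "card {j. j < (n::nat) \<and> P j} = (\<Sum>j<n. of_bool (P j))"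
  by (simp add: sum.If_cases Int_def conj_commute)

lemma sum_lessThan_mult_blocks:
  fixes f :: "nat \<Rightarrow> 'a::comm_monoid_add"
  shows "(\<Sum>j<z * L. f j) = (\<Sum>k<L. \<Sum>c<z. f (k * z + c))"
proof -
  have "(\<Sum>c<z. f (k * z + c)) = sum f {k * z..<k * z + z}" for k
    using sum.atLeastLessThan_shift_0[of f "k * z" "k * z + z"] by (simp add: atLeast0LessThan comp_def)
  then show ?thesis
    by (simp add: sum.nat_group mult.commute)
qed

lemma card_circ_row:
  assumes "0 < z"
  shows "card {c. c < z \<and> circ z p r c} = 1"
proof -
  have "{c. c < z \<and> circ z p r c} = {(r + p) mod z}"
    using assms by (auto simp: circ_def)
  then show ?thesis by simp
qed

lemma card_circ_column:
  assumes "0 < z"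
  shows "card {t. t < z \<and> circ z p t (c mod z)} = 1"
proof -
  define t0 where "t0 = (c + (z - p mod z)) mod z"
  have "[t0 + p = c + (z - p mod z) + p mod z] (mod z)"
    unfolding t0_def by (intro cong_add) (simp_all add: cong_def)
  also have "c + (z - p mod z) + p mod z = c + z"
    using mod_less_divisor[OF assms, of p] by linarith
  finally have t0: "[t0 + p = c] (mod z)"
    by (simp add: cong_def)
  have "{t. t < z \<and> circ z p t (c mod z)} = {t0}"
  proof safe
    fix t assume "t < z" "circ z p t (c mod z)"
    then have "[t + p = t0 + p] (mod z)" "t < z"
      using t0 by (auto simp: circ_def cong_def)
    moreover have "t0 < z"
      using assms by (simp add: t0_def)
    ultimately show "t = t0"
      by (meson cong_add_rcancel_nat cong_less_modulus_unique_nat)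
  qed (use assms t0 in \<open>auto simp: t0_def circ_def cong_def\<close>)
  then show ?thesis by simp
qed

lemma pcm_in_block:
  assumes "c < z"
  shows "pcm z M i (k * z + c) = (case M (i div z) k of None \<Rightarrow> False | Some p \<Rightarrow> circ z p (i mod z) c)"
    and "pcm z M (k * z + c) j = (case M k (j div z) of None \<Rightarrow> False | Some p \<Rightarrow> circ z p c (j mod z))"
proof -
  have block: "(k * z + c) div z = k" "(k * z + c) mod z = c"
    using assms by simp_all
  show "pcm z M i (k * z + c) = (case M (i div z) k of None \<Rightarrow> False | Some p \<Rightarrow> circ z p (i mod z) c)"
    and "pcm z M (k * z + c) j = (case M k (j div z) of None \<Rightarrow> False | Some p \<Rightarrow> circ z p c (j mod z))"
    by (simp_all only: pcm_def block)
qed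

lemma card_pcm_row_blocks:
  assumes "0 < z"
  shows "card {j. j < z * L \<and> pcm z M i j \<and> B (j div z)} = card {k. k < L \<and> M (i div z) k \<noteq> None \<and> B k}"
proof -
  have "(\<Sum>c<z. of_bool (pcm z M i (k * z + c) \<and> B k)) = (of_bool (M (i div z) k \<noteq> None \<and> B k) :: nat)" for k
    using card_circ_row[OF assms] assms
    by (cases "M (i div z) k") (simp_all add: pcm_in_block card_lessThan_filter[symmetric] conj_commute)
  then show ?thesis
    using assms by (simp add: card_lessThan_filter sum_lessThan_mult_blocks)
qed

lemma sum_card_pcm_block_row:
  assumes "0 < z"
  shows "(\<Sum>t<z. card {j. j < n \<and> pcm z M (r * z + t) j \<and> P j})
           = card {j. j < n \<and> M r (j div z) \<noteq> None \<and> P j}"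
proof -
  have "(\<Sum>t<z. of_bool (pcm z M (r * z + t) j \<and> P j)) = (of_bool (M r (j div z) \<noteq> None \<and> P j) :: nat)" for j
    using card_circ_column[OF assms, of _ j] assms
    by (cases "M r (j div z)") (simp_all add: pcm_in_block card_lessThan_filter[symmetric] conj_commute)
  then show ?thesis
    unfolding card_lessThan_filter by (subst sum.swap) simp
qed

lemma even_base_overlap_of_pcm_row_in_code:
  assumes "0 < z" and "r < J"
    and "map (pcm z MD i) [0..<z * L] \<in> qc_code z J L MC"
  shows "even (card {k. k < L \<and> MD (i div z) k \<noteq> None \<and> MC r k \<noteq> None})"
proof -
  have "even (card {j. j < z * L \<and> pcm z MC (r * z + t) j \<and> pcm z MD i j})" if "t < z" for t
  proof -
    have "r * z + t < Suc r * z"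
      using that by simp
    also have "\<dots> \<le> J * z"
      using assms(2) by (intro mult_le_mono1) simp
    finally have "even (card {j. j < z * L \<and> pcm z MC (r * z + t) j \<and> map (pcm z MD i) [0..<z * L] ! j})"
      using assms(3) by (simp add: qc_code_def mult.commute)
    moreover have "{j. j < z * L \<and> pcm z MC (r * z + t) j \<and> map (pcm z MD i) [0..<z * L] ! j}
        = {j. j < z * L \<and> pcm z MC (r * z + t) j \<and> pcm z MD i j}"
      by auto
    ultimately show ?thesis
      by simp
  qed
  then have "even (\<Sum>t<z. card {j. j < z * L \<and> pcm z MC (r * z + t) j \<and> pcm z MD i j})"
    by (intro dvd_sum) simp
  also have "(\<Sum>t<z. card {j. j < z * L \<and> pcm z MC (r * z + t) j \<and> pcm z MD i j})
      = card {j. j < z * L \<and> pcm z MD i j \<and> MC r (j div z) \<noteq> None}"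
    using sum_card_pcm_block_row[OF assms(1)] by (simp add: conj_commute)
  also have "\<dots> = card {k. k < L \<and> MD (i div z) k \<noteq> None \<and> MC r k \<noteq> None}"
    by (rule card_pcm_row_blocks[OF assms(1)])
  finally show ?thesis .
qed

lemma pcm_row_in_dual_code:
  assumes "i < z * J"
  shows "map (pcm z M i) [0..<z * L] \<in> dual_code (z * L) (qc_code z J L M)"
proof -
  have "orth d (map (pcm z M i) [0..<z * L])" if "d \<in> qc_code z J L M" for d
  proof -
    from that assms have "length d = z * L" "even (card {j. j < z * L \<and> pcm z M i j \<and> d ! j})"
      by (auto simp: qc_code_def)
    moreover from \<open>length d = z * L\<close> have "{j. j < length d \<and> j < z * L \<and> d ! j \<and> map (pcm z M i) [0..<z * L] ! j}
        = {j. j < z * L \<and> pcm z M i j \<and> d ! j}"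
      by auto
    ultimately show ?thesis
      by (simp add: orth_def)
  qed
  then show ?thesis
    by (simp add: dual_code_def)
qed

lemma length_eq_of_dual_code_subset:
  assumes "dual_code n D \<subseteq> qc_code z J L M"
  shows "n = z * L"
proof -
  have no_overlap: "{j. j < length d \<and> j < length (replicate n False) \<and> d ! j \<and> replicate n False ! j} = {}" for d
    by auto
  have "replicate n False \<in> dual_code n D"
    unfolding dual_code_def mem_Collect_eq orth_def no_overlap by simp
  then show ?thesis
    using assms by (auto simp: qc_code_def)
qed

lemma sum_row_weight_dist:
  assumes "N \<le> W"
  shows "(\<Sum>w\<le>W. row_weight_dist H R N w) = R"
proof -
  have "(\<Sum>w\<le>W. row_weight_dist H R N w) = card (\<Union>w\<le>W. {i. i < R \<and> card {j. j < N \<and> H i j} = w})"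
    unfolding row_weight_dist_def by (rule card_UN_disjoint[symmetric]) auto
  also have "(\<Union>w\<le>W. {i. i < R \<and> card {j. j < N \<and> H i j} = w}) = {..<R}"
  proof -
    have "card {j. j < N \<and> H i j} \<le> W" for i
    proof -
      have "card {j. j < N \<and> H i j} \<le> card {..<N}"
        by (rule card_mono) auto
      then show ?thesis
        using assms by simp
    qed
    then show ?thesis
      by auto
  qed
  finally show ?thesis
    by simp
qed

lemma row_count_eq_of_row_weight_dist_eq:
  assumes "\<forall>w. row_weight_dist H R N w = row_weight_dist H' R' N' w"
  shows "R = R'"
  using sum_row_weight_dist[of N "max N N'" H R] sum_row_weight_dist[of N' "max N N'" H' R'] assms
  by simp

lemma ieee_type_first_row:
  assumes "ieee_type J L M"
  shows "M 0 (L - J) \<noteq> None" "M 0 (L - J + 1) \<noteq> None"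
    and "\<And>k. 0 < k \<Longrightarrow> k < J - 1 \<Longrightarrow> M 0 (L - J + 1 + k) = None"
proof -
  from assms obtain j0 where "0 < j0" "j0 < J - 1"
    and column: "\<forall>i<J. base_matrix M i (L - J) \<longleftrightarrow> (i = 0 \<or> i = J - 1 \<or> i = j0)"
    and diagonal: "\<forall>k < J - 1. \<forall>i < J. base_matrix M i (L - J + 1 + k) \<longleftrightarrow> (i = k \<or> i = k + 1)"
    unfolding ieee_type_def by blast
  show "M 0 (L - J) \<noteq> None"
    using column \<open>j0 < J - 1\<close> by (simp add: base_matrix_def)
  show "M 0 (L - J + 1) \<noteq> None"
    using diagonal[rule_format, of 0 0] \<open>j0 < J - 1\<close> by (simp add: base_matrix_def)
  show "M 0 (L - J + 1 + k) = None" if "0 < k" "k < J - 1" for k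
    using diagonal[rule_format, of k 0] that by (simp add: base_matrix_def)
qed

lemma sum_lessThan_24:
  fixes f :: "nat \<Rightarrow> nat"
  shows "(\<Sum>k<24. f k) = f 0 + f 1 + f 2 + f 3 + f 4 + f 5 + f 6 + f 7 + f 8 + f 9 + f 10 + f 11
    + f 12 + f 13 + f 14 + f 15 + f 16 + f 17 + f 18 + f 19 + f 20 + f 21 + f 22 + f 23"
  by (simp add: numeral_eq_Suc lessThan_Suc add.assoc)

text \<open>Rows 0 and 3 of \<open>Hb_half\<close> force \<open>v 0 = v 1\<close>, rows 4 and 7 force \<open>v 1 = v 10\<close>,
  and rows 9 and 11 force \<open>v 0 \<noteq> v 10\<close>.\<close>
lemma Hb_half_no_codeword_with_ieee_first_row:
  fixes v :: "nat \<Rightarrow> bool"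
  assumes "v 12" "v 13" "\<forall>k\<in>{14..<24}. \<not> v k"
    and "\<forall>r<12. even (card {k. k < 24 \<and> Hb_half r k \<and> v k})"
  shows False
proof -
  have off: "\<not> v 15" "\<not> v 16" "\<not> v 17" "\<not> v 19" "\<not> v 20" "\<not> v 21" "\<not> v 22" "\<not> v 23"
    using assms(3) by simp_all
  have "even (\<Sum>k<24. of_bool (Hb_half r k \<and> v k) :: nat)" if "r < 12" for r
    using assms(4) that unfolding card_lessThan_filter by blast
  from this[of 0] this[of 3] this[of 4] this[of 7] this[of 9] this[of 11] show False
    using assms(1,2) off unfolding sum_lessThan_24
    by (simp add: Hb_half_def Hb_half_rows_def of_bool_def split: if_splits)
qed

theorem mainTheorem4:
  fixes z :: nat and MC :: "nat \<Rightarrow> nat \<Rightarrow> nat option"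
  assumes "0 < z"
    and "model_matrix z 12 24 MC"
    and "\<forall>i<12. \<forall>j<24. base_matrix MC i j \<longleftrightarrow> Hb_half i j"
  shows "\<not> (\<exists>J L MD. model_matrix z J L MD \<and> ieee_type J L MD \<and>
            (\<forall>w. row_weight_dist (pcm z MC) (z * 12) (z * 24) w
                 = row_weight_dist (pcm z MD) (z * J) (z * L) w) \<and>
            (\<forall>j < z * L. 2 \<le> card {i. i < z * J \<and> pcm z MD i j}) \<and>
            dual_code (z * L) (qc_code z J L MD) \<subseteq> qc_code z 12 24 MC)"
proof
  assume "\<exists>J L MD. model_matrix z J L MD \<and> ieee_type J L MD \<and>
            (\<forall>w. row_weight_dist (pcm z MC) (z * 12) (z * 24) w
                 = row_weight_dist (pcm z MD) (z * J) (z * L) w) \<and>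
            (\<forall>j < z * L. 2 \<le> card {i. i < z * J \<and> pcm z MD i j}) \<and>
            dual_code (z * L) (qc_code z J L MD) \<subseteq> qc_code z 12 24 MC"
  then obtain J L MD where ieee: "ieee_type J L MD"
    and rows: "\<forall>w. row_weight_dist (pcm z MC) (z * 12) (z * 24) w
                 = row_weight_dist (pcm z MD) (z * J) (z * L) w"
    and dual: "dual_code (z * L) (qc_code z J L MD) \<subseteq> qc_code z 12 24 MC"
    by blast
  have L: "L = 24" and J: "J = 12"
    using length_eq_of_dual_code_subset[OF dual] row_count_eq_of_row_weight_dist_eq[OF rows] assms(1)
    by simp_all
  have "map (pcm z MD 0) [0..<z * 24] \<in> qc_code z 12 24 MC"
    using pcm_row_in_dual_code[of 0 z 12 MD 24] dual assms(1) unfolding L J by auto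
  then have "even (card {k. k < 24 \<and> MD 0 k \<noteq> None \<and> MC r k \<noteq> None})" if "r < 12" for r
    using even_base_overlap_of_pcm_row_in_code[of z r 12 MD 0 24 MC] assms(1) that by simp
  moreover have "{k. k < 24 \<and> MD 0 k \<noteq> None \<and> MC r k \<noteq> None}
      = {k. k < 24 \<and> Hb_half r k \<and> MD 0 k \<noteq> None}" if "r < 12" for r
    using assms(3) that by (auto simp: base_matrix_def)
  moreover have "MD 0 12 \<noteq> None" "MD 0 13 \<noteq> None"
    using ieee_type_first_row(1,2)[OF ieee] unfolding L J by simp_all
  moreover have "MD 0 k = None" if "k \<in> {14..<24}" for k
    using ieee_type_first_row(3)[OF ieee, of "k - 13"] that unfolding L J by auto
  ultimately show False
    by (intro Hb_half_no_codeword_with_ieee_first_row[of "\<lambda>k. MD 0 k \<noteq> None"])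
      auto
qed

end
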